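(* Let $k,m,n,l$ be positive integers with $nl+ml\le k$ and let $q$ be a prime power. Let $\mathbb{L}$ be the set of $l$-dimensional subspaces of $\mathbb{F}_q^k$ and define $\mathbb{X}=\{\{L_1,\dots,L_n\}\subseteq\mathbb{L}: \dim(L_1+\cdots+L_n)=nl\}$, $\mathbb{Y}=\{\{L_1,\dots,L_m\}\subseteq\mathbb{L}: \dim(L_1+\cdots+L_m)=ml\}$, $\mathbb{Z}=\{\{L_1,\dots,L_{n+m}\}\subseteq\mathbb{L}: \dim(L_1+\cdots+L_{n+m})=(n+m)l\}$. Let $B$ be the bipartite graph with left (user) vertex set $\mathbb{X}$, right (subfile) vertex set $\mathbb{Y}$, and $X$ adjacent to $Y$ iff $X\cup Y\in\mathbb{Z}$. Put $P=\prod_{i=0}^{l-1}\binom{l-i}{1}_q$. Then $B$ is a $(K,F,D)$ bipartite caching graph with $$K=\frac{(l!)^n q^{\frac{n(n-1)l^2}{2}}}{(nl)!\,n!}\cdot\frac{\prod_{i=0}^{nl-1}\binom{k-i}{1}_q}{P^n}\prod_{i=0}^{n-1}\binom{(n-i)l}{l},\qquad F=\frac{(l!)^m q^{\frac{m(m-1)l^2}{2}}}{(ml)!\,m!}\cdot\frac{\prod_{i=0}^{ml-1}\binom{k-i}{1}_q}{P^m}\prod_{i=0}^{m-1}\binom{(m-i)l}{l},$$ admitting an induced matching cover with $$S=\frac{(l!)^{n+m}q^{\frac{(n+m)(n+m-1)l^2}{2}}}{((n+m)l)!\,(n+m)!}\cdot\frac{\prod_{i=0}^{(n+m)l-1}\binom{k-i}{1}_q}{P^{n+m}}\prod_{i=0}^{n+m-1}\binom{(n+m-i)l}{l}$$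 induced matchings, each having $g=\binom{n+m}{n}$ edges; it defines a coded caching scheme (for $N\ge K$ files) with $K$ users, subpacketization $F$, $$\frac{M}{N}=1-q^{mnl^2}\prod_{i=0}^{ml-1}\frac{\binom{k-nl-i}{1}_q}{\binom{k-i}{1}_q},$$ rate $R=S/F$ and global caching gain $\gamma=g$.
   Context: $\binom{a}{1}_q=\frac{q^a-1}{q-1}$; other binomial coefficients $\binom{a}{b}$ are ordinary. Coded caching setup: a server holds $N$ files and is connected by an error-free broadcast link to $K$ users, each with a cache able to store $M$ files; assumed $N\ge K$. Each file is split into $F$ equal-size subfiles indexed by $\mathcal{F}$. Caching is symmetric: each user caches, for each index $f$, the $f$-th subfile of either all files or none. In the delivery phase each user demands one file and the server broadcasts subfile-size transmissions allowing every user to recover its demand, for every demand vector. Rate $R=(\text{number of transmissions})/F$; global caching gain $\gamma=K(1-M/N)/R$. A $(K,F,D)$ bipartite caching graph is a bipartite graph with $K$ left (user) vertices and $F$ right (subfile) vertices, every left vertex of degree $D$; it defines the symmetric caching scheme in which user $k$ does not cache subfile index $f$ exactly when $\{k,f\}$ is an edge (so $M/N=1-D/F$). An induced matching of $B$ is a set $\mathcal{C}\subseteq E(B)$ such that for any two distinct $\{k_1,f_1\},\{k_2,f_2\}\in\mathcal{C}$: $k_1\ne k_2$, $f_1\ne f_2$, $\{k_1,f_2\},\{k_2,f_1\}\notin E(B)$. An induced matching cover is a set of induced matchings partitioning $E(B)$. *)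

theory Defs
  imports "HOL-Analysis.Analysis" "HOL-Library.Disjoint_Sets"
begin

definition qint :: "nat \<Rightarrow> nat \<Rightarrow> real" where
  "qint q a = (real q ^ a - 1) / (real q - 1)"

definition bip_edges :: "'u set \<Rightarrow> 'w set \<Rightarrow> ('u \<Rightarrow> 'w \<Rightarrow> bool) \<Rightarrow> ('u \<times> 'w) set" where
  "bip_edges U W E = {(x, y). x \<in> U \<and> y \<in> W \<and> E x y}"

definition bipartite_caching_graph ::
  "'u set \<Rightarrow> 'w set \<Rightarrow> ('u \<Rightarrow> 'w \<Rightarrow> bool) \<Rightarrow> nat \<Rightarrow> nat \<Rightarrow> nat \<Rightarrow> bool" where
  "bipartite_caching_graph U W E K F D \<longleftrightarrow>
     finite U \<and> finite W \<and> card U = K \<and> card W = F \<and>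
     (\<forall>x\<in>U. card {y\<in>W. E x y} = D)"

definition induced_matching ::
  "'u set \<Rightarrow> 'w set \<Rightarrow> ('u \<Rightarrow> 'w \<Rightarrow> bool) \<Rightarrow> ('u \<times> 'w) set \<Rightarrow> bool" where
  "induced_matching U W E C \<longleftrightarrow> C \<subseteq> bip_edges U W E \<and>
     (\<forall>(x1, y1)\<in>C. \<forall>(x2, y2)\<in>C. (x1, y1) \<noteq> (x2, y2) \<longrightarrow>
        x1 \<noteq> x2 \<and> y1 \<noteq> y2 \<and> \<not> E x1 y2 \<and> \<not> E x2 y1)"

definition induced_matching_cover ::
  "'u set \<Rightarrow> 'w set \<Rightarrow> ('u \<Rightarrow> 'w \<Rightarrow> bool) \<Rightarrow> ('u \<times> 'w) set set \<Rightarrow> bool" where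
  "induced_matching_cover U W E \<C> \<longleftrightarrow>
     (\<forall>C\<in>\<C>. induced_matching U W E C) \<and> partition_on (bip_edges U W E) \<C>"

text \<open>l-dimensional subspaces of F_q^k (k = CARD('n)).\<close>
definition subspaces_dim :: "nat \<Rightarrow> ('a::field ^ 'n) set set" where
  "subspaces_dim l = {L. vec.subspace L \<and> vec.dim L = l}"

text \<open>Sets of t distinct l-dim subspaces whose sum has dimension t*l.
  The sum L_1 + ... + L_t is the span of their union.\<close>
definition indep_family :: "nat \<Rightarrow> nat \<Rightarrow> ('a::field ^ 'n) set set set" where
  "indep_family l t = {X. X \<subseteq> subspaces_dim l \<and> card X = t \<and>
                          vec.dim (vec.span (\<Union>X)) = t * l}"

definition cnt :: "nat \<Rightarrow> nat \<Rightarrow> nat \<Rightarrow> nat \<Rightarrow> real" where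
  "cnt q k l t =
     (fact l) ^ t * real q ^ (t * (t - 1) * l\<^sup>2 div 2) / (fact (t * l) * fact t)
     * ((\<Prod>i<t * l. qint q (k - i)) / (\<Prod>i<l. qint q (l - i)) ^ t)
     * (\<Prod>i<t. real ((t - i) * l choose l))"

end

theory Submission
  imports Defs "HOL-Combinatorics.Multiset_Permutations"
begin

(* Over a field with q elements, r vectors extend a d-dimensional span independently inside
   F_q^k in prod_{i<r} (q^k - q^(d+i)) ways. Choosing the l-dimensional subspaces of a family
   one at a time, each independent of W and of the previous ones, and then forgetting the order
   of the subspaces and of their bases, the t-families of l-subspaces that are independent
   together with W number prod_{i<tl} (q^k - q^(dim W + i)) / (t! |GL_l(F_q)|^t).
   For W = 0 this gives K, F and S; for W the sum of a user vertex X it gives the degree D,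
   which therefore does not depend on X, and its ratio to F is the cache fraction 1 - M/N.
   For an independent (n+m)-family Z the splittings (X, Z - X) with |X| = n form an induced
   matching, because the union of X1 and Z - X2 is a proper subfamily of Z unless X1 = X2;
   every edge (X, Y) is a splitting of the union of X and Y. Counting the edges by users and by matchings then gives
   K D = S binom(n+m, n), i.e. the global caching gain is binom(n+m, n). *)

section \<open>Counting independent families of subspaces\<close>

lemma two_le_card_field: "2 \<le> CARD('a::{finite,field})"
proof -
  have "card {0::'a, 1} \<le> CARD('a)" by (rule card_mono) simp_all
  then show ?thesis by simp
qed

lemma card_span_independent:
  fixes B :: "('a::{finite,field}^'n) set"
  assumes "vec.independent B"
  shows "card (vec.span B) = CARD('a) ^ card B"
  using vec.finiteI_independent[OF assms] assms
proof (induction B rule: finite_induct)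
  case empty
  then show ?case by simp
next
  case (insert b B)
  have indB: "vec.independent B" using insert.prems vec.independent_mono by blast
  have b: "b \<notin> vec.span B" using insert.prems insert.hyps(2) by (simp add: vec.independent_insert)
  let ?f = "\<lambda>(c, x). c *s b + x"
  have image: "vec.span (insert b B) = ?f ` (UNIV \<times> vec.span B)"
  proof (rule set_eqI)
    fix y
    show "y \<in> vec.span (insert b B) \<longleftrightarrow> y \<in> ?f ` (UNIV \<times> vec.span B)"
      unfolding vec.span_breakdown_eq
    proof
      assume "\<exists>c. y - c *s b \<in> vec.span B"
      then obtain c where "y - c *s b \<in> vec.span B" by blast
      then show "y \<in> ?f ` (UNIV \<times> vec.span B)"
        by (intro image_eqI[where x = "(c, y - c *s b)"]) auto
    next
      assume "y \<in> ?f ` (UNIV \<times> vec.span B)"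
      then obtain c x where "x \<in> vec.span B" "y = c *s b + x" by auto
      then show "\<exists>c. y - c *s b \<in> vec.span B" by (intro exI[of _ c]) auto
    qed
  qed
  have "inj_on ?f (UNIV \<times> vec.span B)"
  proof (rule inj_onI, clarify)
    fix c1 x1 c2 x2
    assume x: "x1 \<in> vec.span B" "x2 \<in> vec.span B" and eq: "c1 *s b + x1 = c2 *s b + x2"
    show "c1 = c2 \<and> x1 = x2"
    proof (cases "c1 = c2")
      case True
      then show ?thesis using eq by simp
    next
      case False
      have "(c1 - c2) *s b = x2 - x1" using eq by (simp add: vector_sub_rdistrib algebra_simps)
      then have "(c1 - c2) *s b \<in> vec.span B" using x vec.span_diff by metis
      then have "inverse (c1 - c2) *s ((c1 - c2) *s b) \<in> vec.span B" by (rule vec.span_scale)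
      moreover have "inverse (c1 - c2) * (c1 - c2) = 1" using False by simp
      then have "inverse (c1 - c2) *s ((c1 - c2) *s b) = b"
        by (simp only: vector_smult_assoc vector_smult_lid)
      ultimately show ?thesis using b by simp
    qed
  qed
  then have "card (vec.span (insert b B)) = CARD('a) * card (vec.span B)"
    unfolding image by (simp add: card_image card_cartesian_product)
  then show ?case using insert.IH[OF indB] insert.hyps by simp
qed

lemma card_span:
  fixes S :: "('a::{finite,field}^'n) set"
  shows "card (vec.span S) = CARD('a) ^ vec.dim S"
proof -
  obtain B where B: "B \<subseteq> S" "vec.independent B" "S \<subseteq> vec.span B" "card B = vec.dim S"
    using vec.basis_exists by blast
  then have "vec.span B = vec.span S"
    by (metis vec.span_mono vec.span_span subset_antisym)
  then show ?thesis using card_span_independent[OF B(2)] B(4) by simp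
qed

lemma card_subspace:
  fixes U :: "('a::{finite,field}^'n) set"
  assumes "vec.subspace U"
  shows "card U = CARD('a) ^ vec.dim U"
  by (metis assms card_span vec.span_eq_iff)

lemma dim_Un_le:
  fixes S T :: "('a::field^'n) set"
  shows "vec.dim (S \<union> T) \<le> vec.dim S + vec.dim T"
proof -
  obtain B where B: "vec.independent B" "S \<subseteq> vec.span B" "card B = vec.dim S"
    using vec.basis_exists by blast
  obtain C where C: "vec.independent C" "T \<subseteq> vec.span C" "card C = vec.dim T"
    using vec.basis_exists by blast
  have "S \<union> T \<subseteq> vec.span (B \<union> C)"
    using B(2) C(2) vec.span_mono[of B "B \<union> C"] vec.span_mono[of C "B \<union> C"] by blast
  then have "vec.dim (S \<union> T) \<le> card (B \<union> C)"
    using B(1) C(1) vec.dim_le_card vec.finiteI_independent by blast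
  also have "\<dots> \<le> card B + card C" by (rule card_Un_le)
  finally show ?thesis using B C by simp
qed

lemma dim_set_le_length: "vec.dim (set xs) \<le> length (xs :: ('a::field^'n) list)"
  using vec.dim_le_card[OF vec.span_superset finite_set] card_length order_trans by blast

lemma dim_Un_span:
  fixes A B :: "('a::field^'n) set"
  shows "vec.dim (A \<union> vec.span B) = vec.dim (A \<union> B)"
proof (rule vec.span_eq_dim, rule subset_antisym)
  have "A \<union> vec.span B \<subseteq> vec.span (A \<union> B)"
    using vec.span_superset[of "A \<union> B"] vec.span_mono[of B "A \<union> B"] by blast
  then show "vec.span (A \<union> vec.span B) \<subseteq> vec.span (A \<union> B)"
    using vec.span_minimal vec.subspace_span by blast
  show "vec.span (A \<union> B) \<subseteq> vec.span (A \<union> vec.span B)"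
    by (intro vec.span_mono Un_mono order_refl vec.span_superset)
qed

lemma dim_Union_le:
  fixes Y :: "('a::field^'n) set set"
  assumes "finite Y" "\<And>L. L \<in> Y \<Longrightarrow> vec.dim L \<le> l"
  shows "vec.dim (\<Union>Y) \<le> card Y * l"
  using assms
proof (induction Y rule: finite_induct)
  case empty
  then show ?case by simp
next
  case (insert L Y)
  have "vec.dim (\<Union>(insert L Y)) \<le> vec.dim L + vec.dim (\<Union>Y)"
    using dim_Un_le[of L "\<Union>Y"] by simp
  also have "\<dots> \<le> l + card Y * l" using insert by (simp add: add_mono)
  finally show ?case using insert.hyps by simp
qed

lemma dim_Union_subspaces_dim_le:
  fixes Y :: "('a::field^'n) set set"
  assumes "finite Y" "Y \<subseteq> subspaces_dim l"
  shows "vec.dim (\<Union>Y) \<le> card Y * l"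
  using assms by (intro dim_Union_le) (auto simp: subspaces_dim_def)

text \<open>The (i+1)-st of r vectors extending a d-dimensional span independently in a k-dimensional
  space over a field with q elements has q^k - q^(d+i) choices; in particular
  extension_count q l 0 l is the number of ordered bases of an l-dimensional space.\<close>
definition extension_count :: "nat \<Rightarrow> nat \<Rightarrow> nat \<Rightarrow> nat \<Rightarrow> nat" where
  "extension_count q k d r = (\<Prod>i<r. q ^ k - q ^ (d + i))"

lemma extension_count_add:
  "extension_count q k d (a + b) = extension_count q k d a * extension_count q k (d + a) b"
  unfolding extension_count_def by (induction b) (simp_all add: add.assoc)

lemma extension_count_pos: "2 \<le> q \<Longrightarrow> d + r \<le> k \<Longrightarrow> 0 < extension_count q k d r"
  unfolding extension_count_def by (rule prod_pos) (auto intro!: power_strict_increasing)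

definition independent_extensions :: "('a::field^'n) set \<Rightarrow> ('a^'n) set \<Rightarrow> nat \<Rightarrow> ('a^'n) list set" where
  "independent_extensions U W r =
     {xs. set xs \<subseteq> U \<and> length xs = r \<and> vec.dim (W \<union> set xs) = vec.dim W + r}"

lemma finite_independent_extensions:
  "finite (independent_extensions (U :: ('a::{finite,field}^'n) set) W r)"
proof -
  have "finite {xs :: ('a^'n) list. set xs \<subseteq> UNIV \<and> length xs = r}"
    by (rule finite_lists_length_eq) simp
  then show ?thesis by (rule finite_subset[rotated]) (auto simp: independent_extensions_def)
qed

lemma independent_extensions_0: "independent_extensions U W 0 = {[]}"
  unfolding independent_extensions_def by auto

lemma independent_extensions_Suc:
  fixes U W :: "('a::field^'n) set"
  shows "independent_extensions U W (Suc r) =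
           (\<Union>v\<in>U - vec.span W. Cons v ` independent_extensions U (insert v W) r)"
proof (rule set_eqI, rule iffI)
  fix xs
  assume xs: "xs \<in> independent_extensions U W (Suc r)"
  then obtain v ys where xs_eq: "xs = v # ys" unfolding independent_extensions_def by (cases xs) auto
  have ys: "set ys \<subseteq> U" "length ys = r" "v \<in> U"
    and dim: "vec.dim (insert v (W \<union> set ys)) = vec.dim W + Suc r"
    using xs xs_eq unfolding independent_extensions_def by auto
  have "vec.dim (W \<union> set ys) \<le> vec.dim W + r"
    using dim_Un_le[of W "set ys"] dim_set_le_length[of ys] ys(2) by simp
  then have v: "v \<notin> vec.span W"
    using dim vec.span_mono[of W "W \<union> set ys"] by (auto simp: vec.dim_insert split: if_splits)
  then have "vec.dim (insert v W) = vec.dim W + 1" by (simp add: vec.dim_insert)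
  then have "ys \<in> independent_extensions U (insert v W) r"
    using ys dim unfolding independent_extensions_def by simp
  then show "xs \<in> (\<Union>v\<in>U - vec.span W. Cons v ` independent_extensions U (insert v W) r)"
    using xs_eq v ys(3) by blast
next
  fix xs
  assume "xs \<in> (\<Union>v\<in>U - vec.span W. Cons v ` independent_extensions U (insert v W) r)"
  then obtain v ys where v: "v \<in> U" "v \<notin> vec.span W"
    and ys: "ys \<in> independent_extensions U (insert v W) r" and xs: "xs = v # ys" by blast
  have "vec.dim (insert v W) = vec.dim W + 1" using v by (simp add: vec.dim_insert)
  moreover have "W \<union> set xs = insert v W \<union> set ys" using xs by auto
  ultimately show "xs \<in> independent_extensions U W (Suc r)"
    using ys v xs unfolding independent_extensions_def by simp
qed

lemma card_independent_extensions:
  fixes U W :: "('a::{finite,field}^'n) set"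
  assumes U: "vec.subspace U" and "W \<subseteq> U" "vec.dim W + r \<le> vec.dim U"
  shows "card (independent_extensions U W r) = extension_count CARD('a) (vec.dim U) (vec.dim W) r"
  using assms(2,3)
proof (induction r arbitrary: W)
  case 0
  then show ?case by (simp add: independent_extensions_0 extension_count_def)
next
  case (Suc r)
  let ?q = "CARD('a)"
  have "vec.span W \<subseteq> U" using Suc.prems U vec.span_minimal by blast
  then have card_diff: "card (U - vec.span W) = extension_count ?q (vec.dim U) (vec.dim W) 1"
    using card_Diff_subset[OF finite \<open>vec.span W \<subseteq> U\<close>] card_subspace[OF U] card_span[of W]
    by (simp add: extension_count_def)
  have IH: "card (independent_extensions U (insert v W) r)
            = extension_count ?q (vec.dim U) (vec.dim W + 1) r" if "v \<in> U - vec.span W" for v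
    using Suc.IH[of "insert v W"] Suc.prems that by (simp add: vec.dim_insert)
  have "card (independent_extensions U W (Suc r))
        = (\<Sum>v\<in>U - vec.span W. card (Cons v ` independent_extensions U (insert v W) r))"
    unfolding independent_extensions_Suc
    by (rule card_UN_disjoint) (auto simp: finite_independent_extensions)
  also have "\<dots> = (\<Sum>v\<in>U - vec.span W. extension_count ?q (vec.dim U) (vec.dim W + 1) r)"
    by (intro sum.cong refl) (simp add: card_image IH)
  also have "\<dots> = card (U - vec.span W) * extension_count ?q (vec.dim U) (vec.dim W + 1) r"
    by simp
  also have "\<dots> = extension_count ?q (vec.dim U) (vec.dim W) (1 + r)"
    unfolding card_diff extension_count_add ..
  finally show ?case by simp
qed

lemma card_constant_fibres:
  assumes "finite A" "finite B" "f ` A \<subseteq> B" "\<And>b. b \<in> B \<Longrightarrow> card {a\<in>A. f a = b} = c"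
  shows "card A = card B * c"
  using sum.group[OF assms(1-3), of "\<lambda>_. 1 :: nat"] assms(4) by simp

definition transversal_subspaces :: "nat \<Rightarrow> ('a::field^'n) set \<Rightarrow> ('a^'n) set set" where
  "transversal_subspaces l W = {L \<in> subspaces_dim l. vec.dim (W \<union> L) = vec.dim W + l}"

lemma dim_set_independent_extension:
  assumes "xs \<in> independent_extensions U W r"
  shows "vec.dim (set xs) = r"
proof -
  have "vec.dim W + r \<le> vec.dim W + vec.dim (set xs)"
    using assms dim_Un_le[of W "set xs"] unfolding independent_extensions_def by simp
  then show ?thesis
    using assms dim_set_le_length[of xs] unfolding independent_extensions_def by simp
qed

lemma span_independent_extension_transversal:
  assumes "xs \<in> independent_extensions UNIV W l"
  shows "vec.span (set xs) \<in> transversal_subspaces l W"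
  using assms dim_set_independent_extension[OF assms] dim_Un_span[of W "set xs"]
  unfolding transversal_subspaces_def subspaces_dim_def independent_extensions_def
  by (simp add: vec.subspace_span)

lemma independent_extensions_spanning_transversal:
  assumes L: "L \<in> transversal_subspaces l W"
  shows "{xs \<in> independent_extensions UNIV W l. vec.span (set xs) = L} = independent_extensions L {} l"
proof (rule set_eqI, rule iffI)
  fix xs
  assume xs: "xs \<in> {xs \<in> independent_extensions UNIV W l. vec.span (set xs) = L}"
  then show "xs \<in> independent_extensions L {} l"
    using dim_set_independent_extension[of xs] vec.span_superset[of "set xs"]
    unfolding independent_extensions_def by auto
next
  fix xs
  assume xs: "xs \<in> independent_extensions L {} l"
  have L': "vec.subspace L" "vec.dim L = l" "vec.dim (W \<union> L) = vec.dim W + l"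
    using L unfolding transversal_subspaces_def subspaces_dim_def by auto
  have xs': "set xs \<subseteq> L" "length xs = l" "vec.dim (set xs) = l"
    using xs unfolding independent_extensions_def by auto
  then have "vec.span (set xs) = vec.span L" using vec.dim_eq_span[of "set xs" L] L' by simp
  then have span: "vec.span (set xs) = L" using L'(1) by (simp add: vec.span_eq_iff)
  then have "vec.dim (W \<union> set xs) = vec.dim W + l"
    using dim_Un_span[of W "set xs"] L'(3) by simp
  with xs' span show "xs \<in> {xs \<in> independent_extensions UNIV W l. vec.span (set xs) = L}"
    unfolding independent_extensions_def by blast
qed

lemma card_transversal_subspaces:
  fixes W :: "('a::{finite,field}^'n) set"
  assumes "vec.dim W + l \<le> CARD('n)"
  shows "card (transversal_subspaces l W) * extension_count CARD('a) l 0 l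
         = extension_count CARD('a) CARD('n) (vec.dim W) l"
proof -
  have "card (independent_extensions UNIV W l)
        = card (transversal_subspaces l W) * extension_count CARD('a) l 0 l"
  proof (rule card_constant_fibres[where f = "\<lambda>xs. vec.span (set xs)"])
    show "(\<lambda>xs. vec.span (set xs)) ` independent_extensions UNIV W l \<subseteq> transversal_subspaces l W"
      using span_independent_extension_transversal by blast
  next
    fix L
    assume L: "L \<in> transversal_subspaces l W"
    then have "vec.subspace L" "vec.dim L = l"
      unfolding transversal_subspaces_def subspaces_dim_def by auto
    then show "card {xs \<in> independent_extensions UNIV W l. vec.span (set xs) = L}
               = extension_count CARD('a) l 0 l"
      using independent_extensions_spanning_transversal[OF L] card_independent_extensions[of L "{}" l]
      by simp
  qed (simp_all add: finite_independent_extensions)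
  then show ?thesis
    using card_independent_extensions[of UNIV W l] assms by (simp add: vec_dim_card card_cart_basis)
qed

definition independent_subspace_lists :: "nat \<Rightarrow> ('a::field^'n) set \<Rightarrow> nat \<Rightarrow> ('a^'n) set list set" where
  "independent_subspace_lists l W t =
     {Ls. length Ls = t \<and> set Ls \<subseteq> subspaces_dim l \<and> vec.dim (W \<union> \<Union>(set Ls)) = vec.dim W + t * l}"

definition independent_subspace_sets :: "nat \<Rightarrow> ('a::field^'n) set \<Rightarrow> nat \<Rightarrow> ('a^'n) set set set" where
  "independent_subspace_sets l W t =
     {Y. Y \<subseteq> subspaces_dim l \<and> card Y = t \<and> vec.dim (W \<union> \<Union>Y) = vec.dim W + t * l}"

lemma finite_independent_subspace_lists:
  "finite (independent_subspace_lists l (W :: ('a::{finite,field}^'n) set) t)"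
proof -
  have "finite {Ls :: ('a^'n) set list. set Ls \<subseteq> UNIV \<and> length Ls = t}"
    by (rule finite_lists_length_eq) simp
  then show ?thesis by (rule finite_subset[rotated]) (auto simp: independent_subspace_lists_def)
qed

lemma independent_subspace_lists_0: "independent_subspace_lists l W 0 = {[]}"
  unfolding independent_subspace_lists_def by auto

lemma independent_subspace_lists_Suc:
  fixes W :: "('a::field^'n) set"
  shows "independent_subspace_lists l W (Suc t) =
           (\<Union>L\<in>transversal_subspaces l W. Cons L ` independent_subspace_lists l (W \<union> L) t)"
proof (rule set_eqI, rule iffI)
  fix Ls
  assume Ls: "Ls \<in> independent_subspace_lists l W (Suc t)"
  then obtain L Ms where Ls_eq: "Ls = L # Ms"
    unfolding independent_subspace_lists_def by (cases Ls) auto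
  have Ms: "length Ms = t" "L \<in> subspaces_dim l" "set Ms \<subseteq> subspaces_dim l"
    and dim: "vec.dim ((W \<union> L) \<union> \<Union>(set Ms)) = vec.dim W + l + t * l"
    using Ls Ls_eq unfolding independent_subspace_lists_def by (auto simp: Un_assoc)
  have "vec.dim (\<Union>(set Ms)) \<le> card (set Ms) * l"
    by (rule dim_Union_subspaces_dim_le[OF finite_set Ms(3)])
  also have "\<dots> \<le> t * l" using card_length[of Ms] Ms(1) by simp
  finally have "vec.dim (\<Union>(set Ms)) \<le> t * l" .
  then have "vec.dim W + l \<le> vec.dim (W \<union> L)"
    using dim dim_Un_le[of "W \<union> L" "\<Union>(set Ms)"] by simp
  moreover have "vec.dim (W \<union> L) \<le> vec.dim W + l"
    using dim_Un_le[of W L] Ms(2) by (simp add: subspaces_dim_def)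
  ultimately have dim_WL: "vec.dim (W \<union> L) = vec.dim W + l" by simp
  then have "L \<in> transversal_subspaces l W \<and> Ms \<in> independent_subspace_lists l (W \<union> L) t"
    using Ms dim unfolding transversal_subspaces_def independent_subspace_lists_def by simp
  then show "Ls \<in> (\<Union>L\<in>transversal_subspaces l W. Cons L ` independent_subspace_lists l (W \<union> L) t)"
    using Ls_eq by blast
next
  fix Ls
  assume "Ls \<in> (\<Union>L\<in>transversal_subspaces l W. Cons L ` independent_subspace_lists l (W \<union> L) t)"
  then obtain L Ms where L: "L \<in> transversal_subspaces l W"
    and Ms: "Ms \<in> independent_subspace_lists l (W \<union> L) t" and Ls: "Ls = L # Ms" by blast
  have "W \<union> \<Union>(set Ls) = (W \<union> L) \<union> \<Union>(set Ms)" using Ls by auto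
  then show "Ls \<in> independent_subspace_lists l W (Suc t)"
    using L Ms Ls unfolding independent_subspace_lists_def transversal_subspaces_def by auto
qed

lemma card_independent_subspace_lists:
  fixes W :: "('a::{finite,field}^'n) set"
  assumes "vec.dim W + t * l \<le> CARD('n)"
  shows "card (independent_subspace_lists l W t) * extension_count CARD('a) l 0 l ^ t
         = extension_count CARD('a) CARD('n) (vec.dim W) (t * l)"
  using assms
proof (induction t arbitrary: W)
  case 0
  then show ?case by (simp add: independent_subspace_lists_0 extension_count_def)
next
  case (Suc t)
  let ?q = "CARD('a)" and ?k = "CARD('n)"
  let ?B = "extension_count ?q l 0 l"
  have IH: "card (independent_subspace_lists l (W \<union> L) t) * ?B ^ t
            = extension_count ?q ?k (vec.dim W + l) (t * l)"
    if "L \<in> transversal_subspaces l W" for L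
    using that Suc.IH[of "W \<union> L"] Suc.prems
    unfolding transversal_subspaces_def by (simp add: add.assoc)
  have "card (independent_subspace_lists l W (Suc t))
        = (\<Sum>L\<in>transversal_subspaces l W. card (Cons L ` independent_subspace_lists l (W \<union> L) t))"
    unfolding independent_subspace_lists_Suc
    by (rule card_UN_disjoint) (auto simp: finite_independent_subspace_lists)
  also have "\<dots> = (\<Sum>L\<in>transversal_subspaces l W. card (independent_subspace_lists l (W \<union> L) t))"
    by (intro sum.cong refl card_image) (auto intro: inj_onI)
  finally have card_Suc: "card (independent_subspace_lists l W (Suc t))
      = (\<Sum>L\<in>transversal_subspaces l W. card (independent_subspace_lists l (W \<union> L) t))" .
  have "card (independent_subspace_lists l W (Suc t)) * ?B ^ Suc t
        = (\<Sum>L\<in>transversal_subspaces l W. card (independent_subspace_lists l (W \<union> L) t) * ?B ^ t) * ?B"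
    unfolding card_Suc power_Suc2 mult.assoc[symmetric] sum_distrib_right ..
  also have "\<dots> = card (transversal_subspaces l W) * ?B * extension_count ?q ?k (vec.dim W + l) (t * l)"
    using IH by simp
  also have "\<dots> = extension_count ?q ?k (vec.dim W) (l + t * l)"
    using card_transversal_subspaces[of W l] Suc.prems extension_count_add by simp
  finally show ?case by simp
qed

lemma distinct_independent_subspace_list:
  assumes "0 < l" "Ls \<in> independent_subspace_lists l W t"
  shows "distinct Ls"
proof (rule ccontr)
  assume "\<not> distinct Ls"
  then have "card (set Ls) < t"
    using assms(2) card_length[of Ls] card_distinct[of Ls]
    unfolding independent_subspace_lists_def by fastforce
  have "vec.dim (\<Union>(set Ls)) \<le> card (set Ls) * l"
    using assms(2) by (intro dim_Union_subspaces_dim_le) (auto simp: independent_subspace_lists_def)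
  also have "\<dots> < t * l" using \<open>card (set Ls) < t\<close> assms(1) by simp
  finally have "vec.dim (\<Union>(set Ls)) < t * l" .
  then show False
    using assms(2) dim_Un_le[of W "\<Union>(set Ls)"] unfolding independent_subspace_lists_def by simp
qed

lemma card_independent_subspace_lists_sets:
  fixes W :: "('a::{finite,field}^'n) set"
  assumes "0 < l"
  shows "card (independent_subspace_lists l W t) = card (independent_subspace_sets l W t) * fact t"
proof (rule card_constant_fibres[where f = set])
  show "set ` independent_subspace_lists l W t \<subseteq> independent_subspace_sets l W t"
  proof
    fix Y
    assume "Y \<in> set ` independent_subspace_lists l W t"
    then obtain Ls where Ls: "Ls \<in> independent_subspace_lists l W t" "Y = set Ls" by blast
    then have "card Y = t"
      using distinct_card[OF distinct_independent_subspace_list[OF assms Ls(1)]]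
      unfolding independent_subspace_lists_def by simp
    then show "Y \<in> independent_subspace_sets l W t"
      using Ls unfolding independent_subspace_lists_def independent_subspace_sets_def by simp
  qed
next
  fix Y
  assume Y: "Y \<in> independent_subspace_sets l W t"
  have "{Ls \<in> independent_subspace_lists l W t. set Ls = Y} = permutations_of_set Y"
    using Y distinct_independent_subspace_list[OF assms]
    by (auto simp: permutations_of_set_def independent_subspace_lists_def
        independent_subspace_sets_def distinct_card)
  moreover have "card Y = t" using Y unfolding independent_subspace_sets_def by simp
  ultimately show "card {Ls \<in> independent_subspace_lists l W t. set Ls = Y} = fact t" by simp
qed (simp_all add: finite_independent_subspace_lists)

lemma card_independent_subspace_sets:
  fixes W :: "('a::{finite,field}^'n) set"
  assumes "0 < l" "vec.dim W + t * l \<le> CARD('n)"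
  shows "card (independent_subspace_sets l W t) * (fact t * extension_count CARD('a) l 0 l ^ t)
         = extension_count CARD('a) CARD('n) (vec.dim W) (t * l)"
  using card_independent_subspace_lists[OF assms(2)]
  unfolding card_independent_subspace_lists_sets[OF assms(1)] by (simp add: mult.assoc)

section \<open>The closed form of the counts\<close>

lemma sum_lessThan_id_add: "(\<Sum>i<a + b. i) = (\<Sum>i<a. i) + a * b + (\<Sum>i<b. i :: nat)"
  by (induction b) (simp_all add: algebra_simps)

lemma sum_lessThan_id_mult: "(\<Sum>i<t * l. i) = t * (\<Sum>i<l. i) + l * l * (\<Sum>i<t. i :: nat)"
proof (induction t)
  case 0
  then show ?case by simp
next
  case (Suc t)
  have "(\<Sum>i<Suc t * l. i) = (\<Sum>i<l. i) + l * (t * l) + (\<Sum>i<t * l. i)"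
    using sum_lessThan_id_add[of l "t * l"] by simp
  then show ?case using Suc by (simp add: algebra_simps)
qed

lemma two_sum_lessThan_id: "2 * (\<Sum>i<t. i) = t * (t - 1 :: nat)"
proof (induction t)
  case (Suc t)
  then show ?case by (cases t) (simp_all add: algebra_simps)
qed simp

lemma fact_power_prod_choose: "(fact l :: nat) ^ t * (\<Prod>i<t. (t - i) * l choose l) = fact (t * l)"
proof (induction t)
  case 0
  then show ?case by simp
next
  case (Suc t)
  have "(\<Prod>i<Suc t. (Suc t - i) * l choose l) = (Suc t * l choose l) * (\<Prod>i<t. (t - i) * l choose l)"
    by (simp only: prod.lessThan_Suc_shift diff_Suc_Suc minus_nat.diff_0)
  then have "(fact l :: nat) ^ Suc t * (\<Prod>i<Suc t. (Suc t - i) * l choose l)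
             = fact l * fact (t * l) * (Suc t * l choose l)"
    using Suc by (simp add: algebra_simps)
  also have "\<dots> = fact (Suc t * l)"
    using binomial_fact_lemma[of l "Suc t * l"] by (simp add: algebra_simps)
  finally show ?case .
qed

lemma qint_pos: "2 \<le> q \<Longrightarrow> 0 < a \<Longrightarrow> 0 < qint q a"
  unfolding qint_def by (simp add: one_less_power)

lemma real_power_diff_eq_qint:
  assumes "2 \<le> q" "i \<le> k"
  shows "real (q ^ k - q ^ i) = real q ^ i * (real q - 1) * qint q (k - i)"
proof -
  have "real q ^ k = real q ^ i * real q ^ (k - i)"
    using assms(2) by (simp flip: power_add)
  then have "real (q ^ k - q ^ i) = real q ^ i * (real q ^ (k - i) - 1)"
    using assms by (simp add: of_nat_diff power_increasing algebra_simps)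
  then show ?thesis using assms(1) unfolding qint_def by simp
qed

lemma real_extension_count:
  assumes "2 \<le> q" "d + r \<le> k"
  shows "real (extension_count q k d r)
         = real q ^ (d * r + (\<Sum>i<r. i)) * (real q - 1) ^ r * (\<Prod>i<r. qint q (k - d - i))"
proof -
  have "real (extension_count q k d r) = (\<Prod>i<r. real q ^ (d + i) * (real q - 1) * qint q (k - (d + i)))"
    unfolding extension_count_def of_nat_prod using assms
    by (intro prod.cong refl real_power_diff_eq_qint) auto
  also have "\<dots> = real q ^ (\<Sum>i<r. d + i) * (real q - 1) ^ r * (\<Prod>i<r. qint q (k - d - i))"
    by (simp add: prod.distrib power_sum)
  also have "(\<Sum>i<r. d + i) = d * r + (\<Sum>i<r. i)"
    by (simp add: sum.distrib)
  finally show ?thesis .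
qed

lemma cnt_eq_extension_count:
  assumes "2 \<le> q" "t * l \<le> k"
  shows "cnt q k l t = real (extension_count q k 0 (t * l)) / (fact t * real (extension_count q l 0 l) ^ t)"
proof -
  define Qk where "Qk = (\<Prod>i<t * l. qint q (k - i))"
  define Ql where "Ql = (\<Prod>i<l. qint q (l - i))"
  have "Ql \<noteq> 0" unfolding Ql_def using qint_pos[OF assms(1)] by (auto simp: less_imp_neq[symmetric])
  moreover have "real q \<noteq> 0" "real q - 1 \<noteq> 0" using assms by auto
  moreover have "real (extension_count q k 0 (t * l))
                 = real q ^ (\<Sum>i<t * l. i) * (real q - 1) ^ (t * l) * Qk"
    using real_extension_count[OF assms(1), of 0 "t * l" k] assms unfolding Qk_def by simp
  moreover have "real (extension_count q l 0 l) = real q ^ (\<Sum>i<l. i) * (real q - 1) ^ l * Ql"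
    using real_extension_count[OF assms(1), of 0 l l] unfolding Ql_def by simp
  moreover have "t * (t - 1) * l\<^sup>2 div 2 = l * l * (\<Sum>i<t. i)"
    unfolding two_sum_lessThan_id[symmetric] by (simp add: power2_eq_square mult.assoc ac_simps)
  moreover have "(fact l :: real) ^ t * (\<Prod>i<t. real ((t - i) * l choose l)) = fact (t * l)"
    using arg_cong[OF fact_power_prod_choose[of l t], of real] by (simp add: of_nat_prod)
  ultimately show ?thesis
    unfolding cnt_def Qk_def[symmetric] Ql_def[symmetric] sum_lessThan_id_mult
    by (simp add: field_simps power_add power_mult_distrib power_mult[symmetric] mult.commute)
qed

lemma extension_count_ratio:
  assumes "2 \<le> q" "n * l + m * l \<le> k"
  shows "real (extension_count q k (n * l) (m * l)) / real (extension_count q k 0 (m * l))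
         = real q ^ (m * n * l\<^sup>2) * (\<Prod>i<m * l. qint q (k - n * l - i) / qint q (k - i))"
proof -
  have factor: "real (q ^ k - q ^ (n * l + i)) / real (q ^ k - q ^ (0 + i))
                = real q ^ (n * l) * (qint q (k - n * l - i) / qint q (k - i))" if "i < m * l" for i
  proof -
    have i: "n * l + i \<le> k" "i \<le> k" using that assms by auto
    have "0 < qint q (k - i)" "real q \<noteq> 0" "real q - 1 \<noteq> 0"
      using that assms qint_pos[OF assms(1)] by auto
    then show ?thesis
      unfolding real_power_diff_eq_qint[OF assms(1) i(1)] real_power_diff_eq_qint[OF assms(1) i(2)] add_0
      by (simp add: field_simps power_add)
  qed
  have "real (extension_count q k (n * l) (m * l)) / real (extension_count q k 0 (m * l))
        = (\<Prod>i<m * l. real q ^ (n * l) * (qint q (k - n * l - i) / qint q (k - i)))"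
    unfolding extension_count_def of_nat_prod prod_dividef[symmetric]
    by (intro prod.cong refl factor) simp
  also have "\<dots> = (real q ^ (n * l)) ^ (m * l) * (\<Prod>i<m * l. qint q (k - n * l - i) / qint q (k - i))"
    by (simp only: prod.distrib prod_constant card_lessThan)
  also have "(real q ^ (n * l)) ^ (m * l) = real q ^ (m * n * l\<^sup>2)"
    by (simp add: power_mult[symmetric] power2_eq_square algebra_simps)
  finally show ?thesis .
qed

section \<open>Splittings and induced matchings\<close>

definition splittings :: "nat \<Rightarrow> 'a set \<Rightarrow> ('a set \<times> 'a set) set" where
  "splittings n Z = (\<lambda>X. (X, Z - X)) ` {X. X \<subseteq> Z \<and> card X = n}"

lemma mem_splittings_iff: "(X, Y) \<in> splittings n Z \<longleftrightarrow> X \<subseteq> Z \<and> card X = n \<and> Y = Z - X"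
  unfolding splittings_def by auto

lemma union_mem_splittings: "(X, Y) \<in> splittings n Z \<Longrightarrow> X \<union> Y = Z"
  unfolding mem_splittings_iff by blast

lemma card_splittings: "finite Z \<Longrightarrow> card (splittings n Z) = card Z choose n"
  unfolding splittings_def by (subst card_image) (auto intro: inj_onI simp: n_subsets)

lemma inj_on_splittings: "inj_on (splittings n) {Z. finite Z \<and> n \<le> card Z}"
proof (rule inj_onI)
  fix Z1 Z2
  assume "Z1 \<in> {Z. finite Z \<and> n \<le> card Z}" and eq: "splittings n Z1 = splittings n Z2"
  then have "splittings n Z1 \<noteq> {}" using card_splittings[of Z1 n] by force
  then obtain X Y where "(X, Y) \<in> splittings n Z1" "(X, Y) \<in> splittings n Z2"
    using eq by auto
  then show "Z1 = Z2" using union_mem_splittings by metis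
qed

lemma card_image_splittings:
  assumes "\<And>Z. Z \<in> ZZ \<Longrightarrow> finite Z \<and> n \<le> card Z"
  shows "card (splittings n ` ZZ) = card ZZ"
  using assms by (intro card_image inj_on_subset[OF inj_on_splittings]) auto

text \<open>Two splittings X1, X2 of Z cannot be cross-adjacent: X1 \<union> (Z - X2) is a subset of
  Z that is proper unless X1 = X2, so it is too small to be in ZZ.\<close>
lemma induced_matching_splittings:
  assumes ZZ: "\<And>Z. Z \<in> ZZ \<Longrightarrow> finite Z \<and> card Z = n + m"
    and split: "\<And>Z X. Z \<in> ZZ \<Longrightarrow> X \<subseteq> Z \<Longrightarrow> card X = n \<Longrightarrow> X \<in> XX \<and> Z - X \<in> YY"
    and Z: "Z \<in> ZZ"
  shows "induced_matching XX YY (\<lambda>X Y. X \<union> Y \<in> ZZ) (splittings n Z)"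
  unfolding induced_matching_def
proof (intro conjI)
  show "splittings n Z \<subseteq> bip_edges XX YY (\<lambda>X Y. X \<union> Y \<in> ZZ)"
  proof
    fix p
    assume "p \<in> splittings n Z"
    then obtain X where X: "X \<subseteq> Z" "card X = n" and p: "p = (X, Z - X)"
      unfolding splittings_def by blast
    moreover have "X \<union> (Z - X) = Z" using X(1) by blast
    ultimately show "p \<in> bip_edges XX YY (\<lambda>X Y. X \<union> Y \<in> ZZ)"
      using split[OF Z X] Z unfolding bip_edges_def by simp
  qed
  have not_adjacent: "X1 \<union> (Z - X2) \<notin> ZZ"
    if X: "X1 \<subseteq> Z" "X2 \<subseteq> Z" "card X1 = n" "card X2 = n" "X1 \<noteq> X2" for X1 X2
  proof
    assume "X1 \<union> (Z - X2) \<in> ZZ"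
    then have "X1 \<union> (Z - X2) = Z"
      using ZZ[of "X1 \<union> (Z - X2)"] ZZ[OF Z] X(1) by (intro card_subset_eq) auto
    then have "X2 \<subseteq> X1" using X(2) by blast
    moreover have "finite X1" using ZZ[OF Z] X(1) finite_subset by blast
    ultimately have "X2 = X1" using X(3,4) by (simp add: card_subset_eq)
    then show False using X(5) by simp
  qed
  have "X1 \<noteq> X2 \<and> Y1 \<noteq> Y2 \<and> X1 \<union> Y2 \<notin> ZZ \<and> X2 \<union> Y1 \<notin> ZZ"
    if "(X1, Y1) \<in> splittings n Z" "(X2, Y2) \<in> splittings n Z" "(X1, Y1) \<noteq> (X2, Y2)"
    for X1 Y1 X2 Y2
  proof -
    have X: "X1 \<subseteq> Z" "card X1 = n" "Y1 = Z - X1" "X2 \<subseteq> Z" "card X2 = n" "Y2 = Z - X2"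
      using that(1,2) by (simp_all add: mem_splittings_iff)
    then have "X1 \<noteq> X2" using that(3) by blast
    moreover have "Z - X1 \<noteq> Z - X2" using X(1,4) \<open>X1 \<noteq> X2\<close> by blast
    ultimately show ?thesis using X not_adjacent[of X1 X2] not_adjacent[of X2 X1] by auto
  qed
  then show "\<forall>(X1, Y1)\<in>splittings n Z. \<forall>(X2, Y2)\<in>splittings n Z. (X1, Y1) \<noteq> (X2, Y2) \<longrightarrow>
      X1 \<noteq> X2 \<and> Y1 \<noteq> Y2 \<and> X1 \<union> Y2 \<notin> ZZ \<and> X2 \<union> Y1 \<notin> ZZ"
    by fast
qed

lemma induced_matching_cover_splittings:
  assumes ZZ: "\<And>Z. Z \<in> ZZ \<Longrightarrow> finite Z \<and> card Z = n + m"
    and XX: "\<And>X. X \<in> XX \<Longrightarrow> card X = n"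
    and YY: "\<And>Y. Y \<in> YY \<Longrightarrow> card Y = m"
    and split: "\<And>Z X. Z \<in> ZZ \<Longrightarrow> X \<subseteq> Z \<Longrightarrow> card X = n \<Longrightarrow> X \<in> XX \<and> Z - X \<in> YY"
  shows "induced_matching_cover XX YY (\<lambda>X Y. X \<union> Y \<in> ZZ) (splittings n ` ZZ)"
  unfolding induced_matching_cover_def
proof (intro conjI ballI partition_onI)
  let ?E = "\<lambda>X Y. X \<union> Y \<in> ZZ"
  show "induced_matching XX YY ?E C" if "C \<in> splittings n ` ZZ" for C
    using that induced_matching_splittings[OF ZZ split] by blast
  show "\<Union>(splittings n ` ZZ) = bip_edges XX YY ?E"
  proof
    show "\<Union>(splittings n ` ZZ) \<subseteq> bip_edges XX YY ?E"
    proof (rule UN_least)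
      fix Z
      assume "Z \<in> ZZ"
      from induced_matching_splittings[OF ZZ split this]
      show "splittings n Z \<subseteq> bip_edges XX YY ?E" unfolding induced_matching_def by (rule conjunct1)
    qed
    show "bip_edges XX YY ?E \<subseteq> \<Union>(splittings n ` ZZ)"
    proof
      fix p
      assume "p \<in> bip_edges XX YY ?E"
      then obtain X Y where p: "p = (X, Y)" and XY: "X \<in> XX" "Y \<in> YY" "X \<union> Y \<in> ZZ"
        unfolding bip_edges_def by auto
      then have "finite X" "finite Y" using ZZ by auto
      then have "card (X \<union> Y) + card (X \<inter> Y) = card X + card Y" by (rule card_Un_Int[symmetric])
      then have "X \<inter> Y = {}" using XX[OF XY(1)] YY[OF XY(2)] ZZ[OF XY(3)] \<open>finite X\<close> by simp
      then have "(X, Y) \<in> splittings n (X \<union> Y)" using XY(1) XX by (auto simp: mem_splittings_iff)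
      then show "p \<in> \<Union>(splittings n ` ZZ)" using p XY(3) by blast
    qed
  qed
  show "disjnt C1 C2"
    if C: "C1 \<in> splittings n ` ZZ" "C2 \<in> splittings n ` ZZ" and ne: "C1 \<noteq> C2" for C1 C2
  proof (rule ccontr)
    assume "\<not> disjnt C1 C2"
    then obtain X Y where "(X, Y) \<in> C1" "(X, Y) \<in> C2" unfolding disjnt_def by auto
    moreover obtain Z1 Z2 where "C1 = splittings n Z1" "C2 = splittings n Z2" using C by blast
    ultimately show False using ne union_mem_splittings by metis
  qed
  show "{} \<notin> splittings n ` ZZ"
  proof
    assume "{} \<in> splittings n ` ZZ"
    then obtain Z where "Z \<in> ZZ" "splittings n Z = {}" by auto
    then show False using ZZ[of Z] card_splittings[of Z n] by simp
  qed
qed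

text \<open>Double counting the edges, by users and by matchings, gives K D = S g.\<close>
lemma global_caching_gain:
  assumes graph: "bipartite_caching_graph U W E K F D"
    and cover: "induced_matching_cover U W E \<C>" and size: "\<And>C. C \<in> \<C> \<Longrightarrow> card C = g"
    and F: "0 < F" and S: "0 < card \<C>"
  shows "real K * (1 - (1 - real D / real F)) / (real (card \<C>) / real F) = real g"
proof -
  have fin: "finite U" "finite W" and K: "card U = K" and deg: "\<forall>x\<in>U. card {y\<in>W. E x y} = D"
    using graph unfolding bipartite_caching_graph_def by auto
  have "bip_edges U W E = Sigma U (\<lambda>x. {y\<in>W. E x y})" unfolding bip_edges_def by auto
  then have "card (bip_edges U W E) = (\<Sum>x\<in>U. card {y\<in>W. E x y})"
    using fin by (simp add: card_SigmaI)
  also have "\<dots> = K * D" using sum.cong[OF refl, of U _ "\<lambda>_. D"] deg K by simp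
  finally have by_users: "card (bip_edges U W E) = K * D" .
  have part: "partition_on (bip_edges U W E) \<C>"
    using cover unfolding induced_matching_cover_def by (rule conjunct2)
  have "finite (bip_edges U W E)"
    using finite_subset[of "bip_edges U W E" "U \<times> W"] fin by (auto simp: bip_edges_def)
  moreover have "C \<subseteq> bip_edges U W E" if "C \<in> \<C>" for C
    using partition_onD1[OF part] that by blast
  ultimately have "card (\<Union>\<C>) = sum card \<C>"
    using card_Union_disjoint[OF partition_onD2[OF part]] finite_subset by blast
  also have "\<dots> = card \<C> * g" using size by simp
  finally have "real K * real D = real (card \<C>) * real g"
    using by_users partition_onD1[OF part] by (simp flip: of_nat_mult)
  moreover have "real K * (1 - (1 - real D / real F)) / (real (card \<C>) / real F)
                 = real K * real D / real (card \<C>)"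
    using F by simp
  ultimately show ?thesis using S by simp
qed

section \<open>The caching graph of independent families\<close>

lemma card_indep_family:
  assumes "0 < l" "t * l \<le> CARD('n)"
  shows "card (indep_family l t :: ('a::{finite,field}^'n) set set set)
           * (fact t * extension_count CARD('a) l 0 l ^ t)
         = extension_count CARD('a) CARD('n) 0 (t * l)"
proof -
  have "indep_family l t = (independent_subspace_sets l {} t :: ('a^'n) set set set)"
    unfolding indep_family_def independent_subspace_sets_def by simp
  then show ?thesis using card_independent_subspace_sets[of l "{} :: ('a^'n) set" t] assms by simp
qed

lemma real_card_indep_family:
  assumes "0 < l" "t * l \<le> CARD('n)"
  shows "real (card (indep_family l t :: ('a::{finite,field}^'n) set set set))
         = cnt CARD('a) CARD('n) l t"
proof -
  let ?c = "fact t * real (extension_count CARD('a) l 0 l) ^ t"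
  have "?c \<noteq> 0" using extension_count_pos[OF two_le_card_field[where 'a = 'a], of 0 l l] by simp
  have eq: "real (card (indep_family l t :: ('a^'n) set set set)) * ?c
            = real (extension_count CARD('a) CARD('n) 0 (t * l))"
    using arg_cong[OF card_indep_family[OF assms, where 'a = 'a], of real] by simp
  show ?thesis
    unfolding cnt_eq_extension_count[OF two_le_card_field[where 'a = 'a] assms(2)] eq[symmetric]
    by (simp only: nonzero_mult_div_cancel_right[OF \<open>?c \<noteq> 0\<close>])
qed

lemma card_indep_family_pos:
  assumes "0 < l" "t * l \<le> CARD('n)"
  shows "0 < card (indep_family l t :: ('a::{finite,field}^'n) set set set)"
proof -
  have "0 < extension_count CARD('a) CARD('n) 0 (t * l)"
    using extension_count_pos[OF two_le_card_field[where 'a = 'a]] assms(2) by simp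
  then show ?thesis using card_indep_family[OF assms, where 'a = 'a] by (auto intro: gr0I)
qed

lemma indep_family_subset:
  fixes Z :: "('a::{finite,field}^'n) set set"
  assumes Z: "Z \<in> indep_family l t" and X: "X \<subseteq> Z"
  shows "X \<in> indep_family l (card X)"
proof -
  have Z': "Z \<subseteq> subspaces_dim l" "card Z = t" "vec.dim (\<Union>Z) = t * l"
    using Z unfolding indep_family_def by auto
  have le: "vec.dim (\<Union>Y) \<le> card Y * l" if "Y \<subseteq> Z" for Y
    using that Z'(1) by (intro dim_Union_subspaces_dim_le) auto
  have "\<Union>Z = \<Union>X \<union> \<Union>(Z - X)" using X by blast
  then have "t * l \<le> vec.dim (\<Union>X) + card (Z - X) * l"
    using Z'(3) dim_Un_le[of "\<Union>X" "\<Union>(Z - X)"] le[of "Z - X"] by simp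
  moreover have "card (Z - X) * l = t * l - card X * l"
    using X Z'(2) card_Diff_subset[OF finite X] by (simp add: diff_mult_distrib)
  moreover have "card X * l \<le> t * l" using card_mono[OF finite X] Z'(2) by simp
  ultimately have "card X * l \<le> vec.dim (\<Union>X)" by linarith
  then show ?thesis using le[OF X] X Z'(1) unfolding indep_family_def by auto
qed

lemma neighbours_indep_family:
  fixes X :: "('a::{finite,field}^'n) set set"
  assumes l: "0 < l" and X: "X \<in> indep_family l n"
  shows "{Y \<in> indep_family l m. X \<union> Y \<in> indep_family l (n + m)} = independent_subspace_sets l (\<Union>X) m"
proof -
  have X': "X \<subseteq> subspaces_dim l" "card X = n" "vec.dim (\<Union>X) = n * l"
    using X unfolding indep_family_def by auto
  have union: "\<Union>(X \<union> Y) = \<Union>X \<union> \<Union>Y" for Y :: "('a^'n) set set" by blast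
  show ?thesis
  proof (rule set_eqI, rule iffI)
    fix Y
    assume "Y \<in> {Y \<in> indep_family l m. X \<union> Y \<in> indep_family l (n + m)}"
    then show "Y \<in> independent_subspace_sets l (\<Union>X) m"
      using X' unfolding indep_family_def independent_subspace_sets_def union
      by (simp add: algebra_simps)
  next
    fix Y
    assume "Y \<in> independent_subspace_sets l (\<Union>X) m"
    then have Y: "Y \<subseteq> subspaces_dim l" "card Y = m"
      and dim: "vec.dim (\<Union>X \<union> \<Union>Y) = n * l + m * l"
      unfolding independent_subspace_sets_def using X' by auto
    have le: "vec.dim (\<Union>Y') \<le> card Y' * l" if "Y' \<subseteq> Y" for Y'
      using that Y(1) by (intro dim_Union_subspaces_dim_le) auto
    have dim_Y: "vec.dim (\<Union>Y) = m * l"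
      using dim dim_Un_le[of "\<Union>X" "\<Union>Y"] le[of Y] Y(2) X'(3) by simp
    have disj: "X \<inter> Y = {}"
    proof (rule ccontr)
      assume "X \<inter> Y \<noteq> {}"
      then obtain L where L: "L \<in> X" "L \<in> Y" by blast
      then have "\<Union>X \<union> \<Union>Y = \<Union>X \<union> \<Union>(Y - {L})" by blast
      then have "n * l + m * l \<le> vec.dim (\<Union>X) + vec.dim (\<Union>(Y - {L}))"
        using dim dim_Un_le[of "\<Union>X" "\<Union>(Y - {L})"] by simp
      also have "\<dots> \<le> n * l + (m - 1) * l" using le[of "Y - {L}"] X'(3) L Y(2) by simp
      finally have "m \<le> m - 1" using l by simp
      moreover have "0 < m" using Y(2) L(2) card_gt_0_iff[of Y] by auto
      ultimately show False by simp
    qed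
    then have "card (X \<union> Y) = n + m" using card_Un_disjoint[OF finite finite disj] X' Y by simp
    then show "Y \<in> {Y \<in> indep_family l m. X \<union> Y \<in> indep_family l (n + m)}"
      using X' Y dim dim_Y unfolding indep_family_def union by (simp add: algebra_simps)
  qed
qed

lemma indep_family_caching_graph:
  assumes "0 < l" "n * l + m * l \<le> CARD('n)"
  defines "XX \<equiv> indep_family l n :: ('a::{finite,field}^'n) set set set"
    and "YY \<equiv> indep_family l m :: ('a^'n) set set set"
  shows "\<exists>D. bipartite_caching_graph XX YY (\<lambda>X Y. X \<union> Y \<in> indep_family l (n + m))
                (card XX) (card YY) D
           \<and> real D / real (card YY)
             = real CARD('a) ^ (m * n * l\<^sup>2)
               * (\<Prod>i<m * l. qint CARD('a) (CARD('n) - n * l - i) / qint CARD('a) (CARD('n) - i))"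
proof -
  let ?q = "CARD('a)" and ?k = "CARD('n)"
  define c where "c = fact m * extension_count ?q l 0 l ^ m"
  define D where "D = extension_count ?q ?k (n * l) (m * l) div c"
  have c: "0 < c" unfolding c_def using extension_count_pos[OF two_le_card_field[where 'a = 'a]] by simp
  have degree: "card {Y \<in> YY. X \<union> Y \<in> indep_family l (n + m)} * c
                = extension_count ?q ?k (n * l) (m * l)" if "X \<in> XX" for X
  proof -
    have "vec.dim (\<Union>X) = n * l" using that unfolding XX_def indep_family_def by simp
    then show ?thesis
      using neighbours_indep_family[OF assms(1) that[unfolded XX_def], of m] assms
        card_independent_subspace_sets[of l "\<Union>X" m]
      unfolding YY_def c_def by simp
  qed
  have deg_D: "card {Y \<in> YY. X \<union> Y \<in> indep_family l (n + m)} = D" if "X \<in> XX" for X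
    unfolding D_def degree[OF that, symmetric] using c by simp
  have "0 < card XX" unfolding XX_def by (rule card_indep_family_pos) (use assms in simp_all)
  then obtain X where X: "X \<in> XX" by (metis card.empty ex_in_conv less_irrefl)
  have F: "card YY * c = extension_count ?q ?k 0 (m * l)"
    unfolding YY_def c_def by (rule card_indep_family) (use assms in simp_all)
  have D: "D * c = extension_count ?q ?k (n * l) (m * l)"
    using degree[OF X] deg_D[OF X] by simp
  have "real D / real (card YY) = (real D * real c) / (real (card YY) * real c)"
    using c by simp
  also have "\<dots> = real (extension_count ?q ?k (n * l) (m * l)) / real (extension_count ?q ?k 0 (m * l))"
    unfolding of_nat_mult[symmetric] D F ..
  finally have "real D / real (card YY)
                = real (extension_count ?q ?k (n * l) (m * l)) / real (extension_count ?q ?k 0 (m * l))" .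
  moreover have "bipartite_caching_graph XX YY (\<lambda>X Y. X \<union> Y \<in> indep_family l (n + m)) (card XX) (card YY) D"
    using deg_D unfolding bipartite_caching_graph_def by simp
  ultimately show ?thesis using extension_count_ratio[OF two_le_card_field assms(2)] by auto
qed

lemma induced_matching_cover_indep_family:
  assumes "0 < l"
  shows "induced_matching_cover (indep_family l n) (indep_family l m)
           (\<lambda>X Y. X \<union> Y \<in> indep_family l (n + m))
           (splittings n ` (indep_family l (n + m) :: ('a::{finite,field}^'n) set set set))"
proof (rule induced_matching_cover_splittings)
  fix Z X :: "('a^'n) set set"
  assume Z: "Z \<in> indep_family l (n + m)" and X: "X \<subseteq> Z" "card X = n"
  then have "card (Z - X) = m"
    using card_Diff_subset[OF finite X(1)] unfolding indep_family_def by simp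
  then show "X \<in> indep_family l n \<and> Z - X \<in> indep_family l m"
    using indep_family_subset[OF Z X(1)] indep_family_subset[OF Z, where X = "Z - X"] X by auto
qed (auto simp: indep_family_def)

theorem theorem4:
  fixes k m n l :: nat
  assumes "0 < k" "0 < m" "0 < n" "0 < l"
    and "n * l + m * l \<le> k"
    and "CARD('n) = k"
  defines "q \<equiv> CARD('a::{finite, field})"
    and "XX \<equiv> (indep_family l n :: ('a ^ 'n) set set set)"
    and "YY \<equiv> (indep_family l m :: ('a ^ 'n) set set set)"
    and "E \<equiv> (\<lambda>X Y. X \<union> Y \<in> (indep_family l (n + m) :: ('a ^ 'n) set set set))"
  shows "\<exists>K F D S \<C>.
           bipartite_caching_graph XX YY E K F D \<and>
           real K = cnt q k l n \<and> real F = cnt q k l m \<and>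
           induced_matching_cover XX YY E \<C> \<and> card \<C> = S \<and>
           (\<forall>C\<in>\<C>. card C = (n + m) choose n) \<and>
           real S = cnt q k l (n + m) \<and>
           1 - real D / real F =
             1 - real q ^ (m * n * l\<^sup>2) * (\<Prod>i<m * l. qint q (k - n * l - i) / qint q (k - i)) \<and>
           real K * (1 - (1 - real D / real F)) / (real S / real F) = real ((n + m) choose n)"
proof -
  define ZZ where "ZZ = (indep_family l (n + m) :: ('a ^ 'n) set set set)"
  define \<C> where "\<C> = splittings n ` ZZ"
  have dims: "n * l \<le> k" "m * l \<le> k" "(n + m) * l \<le> k" using assms(5) by (auto simp: algebra_simps)
  obtain D where graph: "bipartite_caching_graph XX YY E (card XX) (card YY) D"
    and ratio: "real D / real (card YY)
                = real q ^ (m * n * l\<^sup>2) * (\<Prod>i<m * l. qint q (k - n * l - i) / qint q (k - i))"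
    using indep_family_caching_graph[OF assms(4), of n m] assms(5,6)
    unfolding XX_def YY_def E_def q_def by blast
  have cover: "induced_matching_cover XX YY E \<C>"
    using induced_matching_cover_indep_family[OF assms(4)] unfolding XX_def YY_def E_def \<C>_def ZZ_def .
  have size: "card C = (n + m) choose n" if C: "C \<in> \<C>" for C
  proof -
    obtain Z where "Z \<in> ZZ" "C = splittings n Z" using C unfolding \<C>_def by blast
    then show ?thesis using card_splittings[OF finite[of Z], of n] unfolding ZZ_def indep_family_def by simp
  qed
  have "card \<C> = card ZZ"
    unfolding \<C>_def by (rule card_image_splittings) (simp add: ZZ_def indep_family_def)
  then have cards: "real (card XX) = cnt q k l n" "real (card YY) = cnt q k l m"
      "real (card \<C>) = cnt q k l (n + m)" "0 < card YY" "0 < card \<C>"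
    using real_card_indep_family[OF assms(4)] card_indep_family_pos[OF assms(4)] dims assms(6)
    unfolding XX_def YY_def ZZ_def q_def by auto
  have "real (card XX) * (1 - (1 - real D / real (card YY))) / (real (card \<C>) / real (card YY))
        = real ((n + m) choose n)"
    using global_caching_gain[OF graph cover size cards(4,5)] by simp
  moreover have "1 - real D / real (card YY)
                 = 1 - real q ^ (m * n * l\<^sup>2) * (\<Prod>i<m * l. qint q (k - n * l - i) / qint q (k - i))"
    using ratio by simp
  ultimately show ?thesis using graph cover size cards(1-3) by blast
qed

end
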